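(* Let $N$ be a positive odd integer and $\alpha,\beta$ real; put $\sigma=\alpha+\beta$. Define the rational functions $$E_1(x)=\frac{(x+\sigma+3)(x+\alpha-\beta+1)(x-\sigma-2N+1)}{4(x+1)(x+3)},\qquad E_2(x)=-\frac{(x-\sigma-1)(x+\beta-\alpha-3)(x+\sigma+2N+1)}{4(x-1)(x-3)},$$ $$G_1(x)=\frac{\sigma(\sigma+2+2N)(x+1+\alpha-\beta)}{(1-x^2)(x+3)},\qquad G_2(x)=\frac{(\alpha-\beta)(x-\sigma-1)(x+\sigma+2N+1)}{(1-x^2)(x-3)},$$ and the operator $$(Hf)(x)=E_1(x)\big(f(x+4)-f(x)\big)+E_2(x)\big(f(x-4)-f(x)\big)+G_1(x)\big(f(-x-2)-f(x)\big)+G_2(x)\big(f(-x+2)-f(x)\big).$$ Then for every $n\in\{0,1,\dots,N\}$ the monic dual $-1$ Hahn polynomial $P_n$ satisfies $(HP_n)(x)=2n\,P_n(x)$ for all $x\notin\{\pm1,\pm3\}$ (in particular $HP_n$ is a polynomial of degree $n$).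
   Context: For $N$ odd: $b_n^{(-1)}=-1-\alpha+\beta$ for $n$ even, $b_n^{(-1)}=-1+\alpha-\beta$ for $n$ odd; $u_n^{(-1)}=4n(N+1-n)$ for $n$ even, $u_n^{(-1)}=4(\alpha+n)(\beta+N+1-n)$ for $n$ odd. The monic dual $-1$ Hahn polynomials are defined by $P_{-1}=0$, $P_0=1$, $P_{n+1}(x)=(x-b_n^{(-1)})P_n(x)-u_n^{(-1)}P_{n-1}(x)$ for $n\ge0$. *)

theory Defs
  imports Complex_Main
begin

text \<open>Recurrence coefficients of the dual -1 Hahn polynomials (N odd case).\<close>

definition bcoef :: "nat \<Rightarrow> real \<Rightarrow> real \<Rightarrow> nat \<Rightarrow> real" where
  "bcoef N \<alpha> \<beta> n = (if even n then -1 - \<alpha> + \<beta> else -1 + \<alpha> - \<beta>)"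

definition ucoef :: "nat \<Rightarrow> real \<Rightarrow> real \<Rightarrow> nat \<Rightarrow> real" where
  "ucoef N \<alpha> \<beta> n = (if even n then 4 * real n * (real N + 1 - real n)
                      else 4 * (\<alpha> + real n) * (\<beta> + real N + 1 - real n))"

fun dhP :: "nat \<Rightarrow> real \<Rightarrow> real \<Rightarrow> nat \<Rightarrow> real \<Rightarrow> real" where
  "dhP N \<alpha> \<beta> 0 x = 1"
| "dhP N \<alpha> \<beta> (Suc 0) x = x - bcoef N \<alpha> \<beta> 0"
| "dhP N \<alpha> \<beta> (Suc (Suc n)) x =
     (x - bcoef N \<alpha> \<beta> (Suc n)) * dhP N \<alpha> \<beta> (Suc n) x
     - ucoef N \<alpha> \<beta> (Suc n) * dhP N \<alpha> \<beta> n x"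

definition E1 :: "nat \<Rightarrow> real \<Rightarrow> real \<Rightarrow> real \<Rightarrow> real" where
  "E1 N \<alpha> \<beta> x = (let \<sigma> = \<alpha> + \<beta> in
     (x + \<sigma> + 3) * (x + \<alpha> - \<beta> + 1) * (x - \<sigma> - 2 * real N + 1) / (4 * (x + 1) * (x + 3)))"

definition E2 :: "nat \<Rightarrow> real \<Rightarrow> real \<Rightarrow> real \<Rightarrow> real" where
  "E2 N \<alpha> \<beta> x = (let \<sigma> = \<alpha> + \<beta> in
     - ((x - \<sigma> - 1) * (x + \<beta> - \<alpha> - 3) * (x + \<sigma> + 2 * real N + 1) / (4 * (x - 1) * (x - 3))))"

definition G1 :: "nat \<Rightarrow> real \<Rightarrow> real \<Rightarrow> real \<Rightarrow> real" where
  "G1 N \<alpha> \<beta> x = (let \<sigma> = \<alpha> + \<beta> in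
     \<sigma> * (\<sigma> + 2 + 2 * real N) * (x + 1 + \<alpha> - \<beta>) / ((1 - x^2) * (x + 3)))"

definition G2 :: "nat \<Rightarrow> real \<Rightarrow> real \<Rightarrow> real \<Rightarrow> real" where
  "G2 N \<alpha> \<beta> x = (let \<sigma> = \<alpha> + \<beta> in
     (\<alpha> - \<beta>) * (x - \<sigma> - 1) * (x + \<sigma> + 2 * real N + 1) / ((1 - x^2) * (x - 3)))"

definition Hop :: "nat \<Rightarrow> real \<Rightarrow> real \<Rightarrow> (real \<Rightarrow> real) \<Rightarrow> real \<Rightarrow> real" where
  "Hop N \<alpha> \<beta> f x =
     E1 N \<alpha> \<beta> x * (f (x + 4) - f x) + E2 N \<alpha> \<beta> x * (f (x - 4) - f x)
   + G1 N \<alpha> \<beta> x * (f (- x - 2) - f x) + G2 N \<alpha> \<beta> x * (f (- x + 2) - f x)"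

end

theory Submission
  imports Defs
begin

(* Write P n for the monic dual -1 Hahn polynomial and H for the operator Hop.
   1. Reflection: with  (R f)(y) = f(-y-2) + (b-a)/(y+1) (f y - f(-y-2))  every P n satisfies
      R (P n) = (-1)^n P n; this follows from the recurrence by induction.
   2. Commutators: let C = [H, y] and C2 = [C, y], i.e. H(y f) = y H f + C f and
      C(y f) = y C f + C2 f.  Both are again combinations of f at x+4, x-4, -x-2, -x+2.
   3. Key identity: for every f and every point x outside the poles {+-1, +-3, -5},
      C2 f = 2(b-a) C(R f) + 16 (H f + (a-b)/2 H(R f) + c1 f - c2 R f)
      for two constants c1, c2; this is a rational-function identity in the coefficients.
   4. Induction on n proves simultaneously  H P n = 2n P n  and
      C P n = 4 P (n+1) - 2 (x - b n) P n, using the recurrence, the Leibniz rules of 2.,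
      and the key identity together with the reflection property (which turn R into the sign
      (-1)^n).
   5. The point x = -5 is a removable singularity: both sides of the eigenvalue equation are
      continuous there and agree nearby. *)

(* The recurrence in a uniform shape (u 0 = 0 absorbs the missing term for n = 0). *)
lemma dhP_Suc:
  "dhP N a b (Suc n) y = (y - bcoef N a b n) * dhP N a b n y - ucoef N a b n * dhP N a b (n - 1) y"
  by (cases n) (simp_all add: ucoef_def)

lemma dhP_Suc_fun:
  "dhP N a b (Suc n) = (\<lambda>y. (y - bcoef N a b n) * dhP N a b n y - ucoef N a b n * dhP N a b (n - 1) y)"
  using dhP_Suc by blast

lemma ucoef_0: "ucoef N a b 0 = 0"
  by (simp add: ucoef_def)

definition refl_op :: "real \<Rightarrow> real \<Rightarrow> (real \<Rightarrow> real) \<Rightarrow> real \<Rightarrow> real" where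
  "refl_op a b f y = f (- y - 2) + (b - a) / (y + 1) * (f y - f (- y - 2))"

(* The reflection property with denominators cleared; this polynomial form is what the
   induction on the recurrence can carry. *)
lemma dhP_reflection_cleared:
  "(y + 1 - (b - a)) * dhP N a b n (- y - 2) + (b - a) * dhP N a b n y
     = (-1)^n * (y + 1) * dhP N a b n y"
proof (induction n rule: less_induct)
  case (less n)
  consider "n = 0" | "n = 1" | k where "n = Suc (Suc k)"
    by (metis One_nat_def not0_implies_Suc)
  then show ?case
  proof cases
    case 3
    have IH: "(y + 1 - (b - a)) * dhP N a b k (- y - 2) + (b - a) * dhP N a b k y
                = (-1)^k * (y + 1) * dhP N a b k y"
             "(y + 1 - (b - a)) * dhP N a b (Suc k) (- y - 2) + (b - a) * dhP N a b (Suc k) y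
                = - ((-1)^k * (y + 1) * dhP N a b (Suc k) y)"
      using less[of k] less[of "Suc k"] 3 by simp_all
    show ?thesis
    proof (cases "even k")
      case True
      then have b: "bcoef N a b (Suc k) = -1 + a - b" and s: "(-1::real)^k = 1"
        by (simp_all add: bcoef_def)
      show ?thesis unfolding 3 dhP.simps b power_Suc s using IH unfolding s by algebra
    next
      case False
      then have b: "bcoef N a b (Suc k) = -1 - a + b" and s: "(-1::real)^k = -1"
        by (simp_all add: bcoef_def)
      show ?thesis unfolding 3 dhP.simps b power_Suc s using IH unfolding s by algebra
    qed
  qed (simp_all add: bcoef_def algebra_simps)
qed

lemma dhP_reflection:
  assumes "y \<noteq> -1"
  shows "refl_op a b (dhP N a b n) y = (-1)^n * dhP N a b n y"
proof -
  have y: "y + 1 \<noteq> 0" using assms by (simp add: add_eq_0_iff)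
  have "(y + 1) * refl_op a b (dhP N a b n) y
          = (y + 1 - (b - a)) * dhP N a b n (- y - 2) + (b - a) * dhP N a b n y"
    unfolding refl_op_def using y by (simp add: field_simps)
  also have "\<dots> = (y + 1) * ((-1)^n * dhP N a b n y)"
    by (simp add: dhP_reflection_cleared)
  finally show ?thesis using y by simp
qed

(* The commutators C = [H, y] and C2 = [C, y]. *)
definition comm_op :: "nat \<Rightarrow> real \<Rightarrow> real \<Rightarrow> (real \<Rightarrow> real) \<Rightarrow> real \<Rightarrow> real" where
  "comm_op N a b f x = E1 N a b x * 4 * f (x + 4) + E2 N a b x * (-4) * f (x - 4)
     + G1 N a b x * (-2*x-2) * f (- x - 2) + G2 N a b x * (-2*x+2) * f (- x + 2)"

definition comm2_op :: "nat \<Rightarrow> real \<Rightarrow> real \<Rightarrow> (real \<Rightarrow> real) \<Rightarrow> real \<Rightarrow> real" where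
  "comm2_op N a b f x = E1 N a b x * 16 * f (x + 4) + E2 N a b x * 16 * f (x - 4)
     + G1 N a b x * (-2*x-2)^2 * f (- x - 2) + G2 N a b x * (-2*x+2)^2 * f (- x + 2)"

lemma Hop_Leibniz:
  "Hop N a b (\<lambda>y. (y - c) * f y - u * g y) x
     = x * Hop N a b f x + comm_op N a b f x - c * Hop N a b f x - u * Hop N a b g x"
  unfolding Hop_def comm_op_def by (simp add: algebra_simps)

lemma comm_op_Leibniz:
  "comm_op N a b (\<lambda>y. (y - c) * f y - u * g y) x
     = x * comm_op N a b f x + comm2_op N a b f x - c * comm_op N a b f x - u * comm_op N a b g x"
  unfolding comm2_op_def comm_op_def by (simp add: algebra_simps power2_eq_square)

lemma Hop_const: "Hop N a b (\<lambda>y. 1) x = 0"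
  unfolding Hop_def by simp

(* An eigenfunction of R (away from y = -1) can be pulled through H and C, as long as
   none of the evaluation points x, x+-4, -x-2, -x+2 equals -1. *)
lemma Hop_refl_eigen:
  assumes "\<And>y. y \<noteq> -1 \<Longrightarrow> refl_op a b f y = s * f y" and "x \<notin> {1, -1, 3, -3, -5}"
  shows "Hop N a b (refl_op a b f) x = s * Hop N a b f x"
proof -
  have "x + 4 \<noteq> -1" "x - 4 \<noteq> -1" "- x - 2 \<noteq> -1" "- x + 2 \<noteq> -1" "x \<noteq> -1"
    using assms(2) by auto
  then show ?thesis unfolding Hop_def by (simp add: assms(1) algebra_simps)
qed

lemma comm_op_refl_eigen:
  assumes "\<And>y. y \<noteq> -1 \<Longrightarrow> refl_op a b f y = s * f y" and "x \<notin> {1, -1, 3, -3, -5}"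
  shows "comm_op N a b (refl_op a b f) x = s * comm_op N a b f x"
proof -
  have "x + 4 \<noteq> -1" "x - 4 \<noteq> -1" "- x - 2 \<noteq> -1" "- x + 2 \<noteq> -1"
    using assms(2) by auto
  then show ?thesis unfolding comm_op_def by (simp add: assms(1) algebra_simps)
qed

(* Bookkeeping for the key identity: after expanding R, both sides are linear in the values
   fa = f(x+4), fb = f(x-4), fc = f(-x-2), fd = f(-x+2), fe = f(-x-6), f0 = f x.  The
   coefficients of fa and fe agree identically (because c = -2d); the identity therefore
   holds as soon as the coefficients of fb, fd, fc, f0 in the difference vanish
   (k1, k2 play the roles of c1, c2). *)
lemma key_identity_by_coefficients:
  fixes e1 e2 g1 g2 q0 q1 q2 f0 fa fb fc fd fe x k1 k2 c d S Rx :: real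
  assumes cd: "c = -2*d" and S: "S = e1+e2+g1+g2" and Rx: "Rx = fc + q0*(f0 - fc)"
  and coeff_fb: "16*c*e2*q2+4*c*(x+1)*g2*(1+q2) = 0"
  and coeff_fd: "4*g2*(x-3)*(x+1)+16*c*e2*(1-q2)-4*c*(x+1)*g2*q2 = 0"
  and coeff_fc: "4*(x+1)^2*g1 -( -2*c*(2*x+2)*g1*(-q0) + 16*g1 - 8*c*g1*(-q0) + (8*c*S-16*k2)*(1-q0)) = 0"
  and coeff_f0: "-( -4*c*(x+1)*g1*(1+q0) -16*S -8*c*g1*(1+q0) + 8*c*S*q0 +16*k1 -16*k2*q0) = 0"
  shows "e1*16*fa + e2*16*fb + g1*(-2*x-2)^2*fc + g2*(-2*x+2)^2*fd =
   2*c*(e1*4*(fe+q1*(fa-fe))+e2*(-4)*(fd+q2*(fb-fd))+g1*(-2*x-2)*(f0+(-q0)*(fc-f0))+g2*(-2*x+2)*(fb+(-q2)*(fd-fb)))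
   +16*(e1*(fa-f0)+e2*(fb-f0)+g1*(fc-f0)+g2*(fd-f0)
     +d*(e1*(fe+q1*(fa-fe)-Rx)+e2*(fd+q2*(fb-fd)-Rx)+g1*(f0+(-q0)*(fc-f0)-Rx)+g2*(fb+(-q2)*(fd-fb)-Rx))
     +k1*f0-k2*Rx)"
proof -
  have "e1*16*fa + e2*16*fb + g1*(-2*x-2)^2*fc + g2*(-2*x+2)^2*fd -
   (2*c*(e1*4*(fe+q1*(fa-fe))+e2*(-4)*(fd+q2*(fb-fd))+g1*(-2*x-2)*(f0+(-q0)*(fc-f0))+g2*(-2*x+2)*(fb+(-q2)*(fd-fb)))
   +16*(e1*(fa-f0)+e2*(fb-f0)+g1*(fc-f0)+g2*(fd-f0)
     +d*(e1*(fe+q1*(fa-fe)-Rx)+e2*(fd+q2*(fb-fd)-Rx)+g1*(f0+(-q0)*(fc-f0)-Rx)+g2*(fb+(-q2)*(fd-fb)-Rx))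
     +k1*f0-k2*Rx))
   = (16*c*e2*q2+4*c*(x+1)*g2*(1+q2))*fb + (4*g2*(x-3)*(x+1)+16*c*e2*(1-q2)-4*c*(x+1)*g2*q2)*fd
     + (4*(x+1)^2*g1 -( -2*c*(2*x+2)*g1*(-q0) + 16*g1 - 8*c*g1*(-q0) + (8*c*S-16*k2)*(1-q0)))*fc
     + (-( -4*c*(x+1)*g1*(1+q0) -16*S -8*c*g1*(1+q0) + 8*c*S*q0 +16*k1 -16*k2*q0))*f0"
    unfolding cd S Rx by (simp add: algebra_simps power2_eq_square)
  then show ?thesis using coeff_fb coeff_fd coeff_fc coeff_f0 by simp
qed

definition key_c1 :: "nat \<Rightarrow> real \<Rightarrow> real \<Rightarrow> real" where
  "key_c1 N a b = (a - b - 2 * real N) / 2"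

definition key_c2 :: "nat \<Rightarrow> real \<Rightarrow> real \<Rightarrow> real" where
  "key_c2 N a b = (2*a*b + 2*a*real N + a + b) / 2"

(* From here on x is a fixed regular point: not a pole of the coefficients and not -5, where
   R (f)(x+4) has a pole. *)
context
  fixes N :: nat and a b x :: real
  assumes x_regular: "x \<notin> {1, -1, 3, -3, -5}"
begin

lemma x_nonzero:
  "x + 1 \<noteq> 0" "x - 1 \<noteq> 0" "x + 3 \<noteq> 0" "x - 3 \<noteq> 0" "1 + x \<noteq> 0" "1 - x \<noteq> 0"
  "1 - x^2 \<noteq> 0"
proof -
  have "1 - x^2 = (1 - x) * (1 + x)" by (simp add: algebra_simps power2_eq_square)
  then show "1 - x^2 \<noteq> 0" using x_regular by auto
qed (use x_regular in auto)

lemma E1_cleared: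
  "E1 N a b x * (4*(x+1)*(x+3)) = (x + (a+b) + 3) * (x + a - b + 1) * (x - (a+b) - 2 * real N + 1)"
  unfolding E1_def Let_def using x_nonzero by simp

lemma E2_cleared:
  "E2 N a b x * (4*(x-1)*(x-3)) = -((x - (a+b) - 1) * (x + b - a - 3) * (x + (a+b) + 2 * real N + 1))"
  unfolding E2_def Let_def using x_nonzero by simp

lemma G1_cleared:
  "G1 N a b x * ((1-x)*(1+x)*(x+3)) = (a+b) * ((a+b) + 2 + 2 * real N) * (x + 1 + a - b)"
proof -
  have "(1-x)*(1+x)*(x+3) = (1 - x^2) * (x + 3)" by (simp add: power2_eq_square algebra_simps)
  then show ?thesis unfolding G1_def Let_def using x_nonzero by simp
qed

lemma G2_cleared:
  "G2 N a b x * ((1-x)*(1+x)*(x-3)) = (a - b) * (x - (a+b) - 1) * (x + (a+b) + 2 * real N + 1)"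
proof -
  have "(1-x)*(1+x)*(x-3) = (1 - x^2) * (x - 3)" by (simp add: power2_eq_square algebra_simps)
  then show ?thesis unfolding G2_def Let_def using x_nonzero by simp
qed

(* A common denominator of everything occurring in the key identity; multiplying a
   coefficient by it turns the claim into a polynomial identity. *)
definition denom :: real where
  "denom = (x+1)*(x-3)*((4*(x+1)*(x+3)) * (4*(x-1)*(x-3)) * ((1-x)*(1+x)*(x+3)) * ((1-x)*(1+x)*(x-3)))"

lemma by_denom: "T * denom = 0 \<Longrightarrow> T = 0"
  using x_nonzero unfolding denom_def by simp

lemma quotients_cleared: "(b-a)/(x+1) * (x+1) = b - a" "(b-a)/(x-3) * (x-3) = b - a"
  using x_nonzero by simp_all

lemmas cleared = E1_cleared E2_cleared G1_cleared G2_cleared quotients_cleared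

lemma coeff_fb_vanishes:
  "16*(b-a)*E2 N a b x*((b-a)/(x-3))+4*(b-a)*(x+1)*G2 N a b x*(1+(b-a)/(x-3)) = 0"
  by (rule by_denom, unfold denom_def) (use cleared in algebra)

lemma coeff_fd_vanishes:
  "4*G2 N a b x*(x-3)*(x+1)+16*(b-a)*E2 N a b x*(1-(b-a)/(x-3))
     -4*(b-a)*(x+1)*G2 N a b x*((b-a)/(x-3)) = 0"
  by (rule by_denom, unfold denom_def) (use cleared in algebra)

lemma coeff_fc_vanishes:
  "4*(x+1)^2*G1 N a b x -( -2*(b-a)*(2*x+2)*G1 N a b x*(-((b-a)/(x+1))) + 16*G1 N a b x
     - 8*(b-a)*G1 N a b x*(-((b-a)/(x+1)))
     + (8*(b-a)*(E1 N a b x+E2 N a b x+G1 N a b x+G2 N a b x)-16*key_c2 N a b)*(1-(b-a)/(x+1))) = 0"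
  by (rule by_denom, unfold denom_def key_c2_def) (use cleared in algebra)

lemma coeff_f0_vanishes:
  "-( -4*(b-a)*(x+1)*G1 N a b x*(1+(b-a)/(x+1)) -16*(E1 N a b x+E2 N a b x+G1 N a b x+G2 N a b x)
     -8*(b-a)*G1 N a b x*(1+(b-a)/(x+1))
     + 8*(b-a)*(E1 N a b x+E2 N a b x+G1 N a b x+G2 N a b x)*((b-a)/(x+1))
     +16*key_c1 N a b -16*key_c2 N a b*((b-a)/(x+1))) = 0"
  by (rule by_denom, unfold denom_def key_c1_def key_c2_def) (use cleared in algebra)

lemma key_identity:
  fixes f :: "real \<Rightarrow> real"
  shows "comm2_op N a b f x = 2 * (b - a) * comm_op N a b (refl_op a b f) x
     + 16 * (Hop N a b f x + ((a - b)/2) * Hop N a b (refl_op a b f) x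
        + key_c1 N a b * f x - key_c2 N a b * refl_op a b f x)"
proof -
  have R_plus4: "refl_op a b f (x + 4) = f (-(x+4)-2) + (b-a)/(x+5) * (f (x+4) - f (-(x+4)-2))"
    unfolding refl_op_def by (simp add: add.assoc)
  have R_minus4: "refl_op a b f (x - 4) = f (- x + 2) + (b-a)/(x-3) * (f (x-4) - f (- x + 2))"
    unfolding refl_op_def by (simp add: algebra_simps)
  have "- x - 2 + 1 = - (x + 1)" "- (- x - 2) - 2 = x" by simp_all
  then have R_reflect_plus: "refl_op a b f (- x - 2) = f x + (-((b-a)/(x+1))) * (f (- x - 2) - f x)"
    unfolding refl_op_def by (simp only: divide_minus_right)
  have "- x + 2 + 1 = - (x - 3)" "- (- x + 2) - 2 = x - 4" by simp_all
  then have R_reflect_minus: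
    "refl_op a b f (- x + 2) = f (x - 4) + (-((b-a)/(x-3))) * (f (- x + 2) - f (x - 4))"
    unfolding refl_op_def by (simp only: divide_minus_right)
  show ?thesis
    unfolding comm2_op_def comm_op_def Hop_def R_plus4 R_minus4 R_reflect_plus R_reflect_minus
    by (rule key_identity_by_coefficients[where c="b-a" and d="(a-b)/2"
          and S="E1 N a b x + E2 N a b x + G1 N a b x + G2 N a b x" and Rx="refl_op a b f x"])
       (use coeff_fb_vanishes coeff_fd_vanishes coeff_fc_vanishes coeff_f0_vanishes
         in \<open>simp_all add: refl_op_def\<close>)
qed

lemma comm_op_const: "comm_op N a b (\<lambda>y. 1) x = 2 * (x - bcoef N a b 0)"
proof -
  have "E1 N a b x * 4 + E2 N a b x * (-4) + G1 N a b x * (-2*x-2) + G2 N a b x * (-2*x+2)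
          - 2 * (x - (-1 - a + b)) = 0"
    by (rule by_denom, unfold denom_def) (use cleared in algebra)
  then show ?thesis unfolding comm_op_def by (simp add: bcoef_def)
qed

lemma Hop_dhP_Suc:
  assumes H_m: "Hop N a b (dhP N a b m) x = 2 * real m * dhP N a b m x"
    and C_m: "comm_op N a b (dhP N a b m) x
                = 4 * dhP N a b (Suc m) x - 2 * (x - bcoef N a b m) * dhP N a b m x"
    and H_prev: "Hop N a b (dhP N a b (m - 1)) x = 2 * real (m - 1) * dhP N a b (m - 1) x"
  shows "Hop N a b (dhP N a b (Suc m)) x = 2 * real (Suc m) * dhP N a b (Suc m) x"
proof -
  have u: "ucoef N a b m * real (m - 1) = ucoef N a b m * (real m - 1)"
    by (cases m) (simp_all add: ucoef_0)
  show ?thesis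
    unfolding dhP_Suc_fun[of N a b m] Hop_Leibniz H_m H_prev
    using C_m dhP_Suc[of N a b m x] u by simp algebra
qed

lemma comm_op_dhP_Suc:
  assumes H_m: "Hop N a b (dhP N a b m) x = 2 * real m * dhP N a b m x"
    and C_m: "comm_op N a b (dhP N a b m) x
                = 4 * dhP N a b (Suc m) x - 2 * (x - bcoef N a b m) * dhP N a b m x"
    and C_prev: "comm_op N a b (dhP N a b (m - 1)) x
                = 4 * dhP N a b (Suc (m - 1)) x - 2 * (x - bcoef N a b (m - 1)) * dhP N a b (m - 1) x"
  shows "comm_op N a b (dhP N a b (Suc m)) x
           = 4 * dhP N a b (Suc (Suc m)) x - 2 * (x - bcoef N a b (Suc m)) * dhP N a b (Suc m) x"
proof -
  define f where "f = dhP N a b m"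
  define g where "g = dhP N a b (m - 1)"
  have refl: "\<And>y. y \<noteq> -1 \<Longrightarrow> refl_op a b f y = (-1)^m * f y"
    unfolding f_def by (rule dhP_reflection)
  have "x \<noteq> -1" using x_regular by auto
  have C2: "comm2_op N a b f x = 2 * (b - a) * ((-1)^m * comm_op N a b f x)
     + 16 * (Hop N a b f x + ((a - b)/2) * ((-1)^m * Hop N a b f x)
        + key_c1 N a b * f x - key_c2 N a b * ((-1)^m * f x))"
    using key_identity[of f] comm_op_refl_eigen[OF refl x_regular, of N]
      Hop_refl_eigen[OF refl x_regular, of N] refl[OF \<open>x \<noteq> -1\<close>] by simp
  have C: "comm_op N a b (dhP N a b (Suc m)) x = x * comm_op N a b f x + comm2_op N a b f x
            - bcoef N a b m * comm_op N a b f x - ucoef N a b m * comm_op N a b g x"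
    unfolding dhP_Suc_fun[of N a b m] comm_op_Leibniz f_def g_def ..
  have C_g: "ucoef N a b m * comm_op N a b g x
               = ucoef N a b m * (4 * f x - 2 * (x - bcoef N a b (m - 1)) * g x)"
    using C_prev unfolding f_def g_def by (cases m) (simp_all add: ucoef_0)
  have P_Suc: "dhP N a b (Suc m) x = (x - bcoef N a b m) * f x - ucoef N a b m * g x"
    unfolding f_def g_def by (rule dhP_Suc)
  have P_Suc_Suc: "dhP N a b (Suc (Suc m)) x
      = (x - bcoef N a b (Suc m)) * dhP N a b (Suc m) x - ucoef N a b (Suc m) * f x"
    unfolding f_def by simp
  show ?thesis
  proof (cases "even m")
    case True
    have sign: "(-1::real)^m = 1" using True by simp
    have b: "bcoef N a b m = -1 - a + b" "bcoef N a b (Suc m) = -1 + a - b"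
      "ucoef N a b m * bcoef N a b (m - 1) = ucoef N a b m * (-1 + a - b)"
      using True by (cases m, simp_all add: ucoef_0 bcoef_def)+
    have u: "ucoef N a b m = 4 * real m * (real N + 1 - real m)"
      "ucoef N a b (Suc m) = 4 * (a + (real m + 1)) * (b + real N + 1 - (real m + 1))"
      using True by (simp_all add: ucoef_def algebra_simps)
    show ?thesis unfolding C C_g using C2[unfolded sign key_c1_def key_c2_def] H_m C_m P_Suc P_Suc_Suc b u
      unfolding f_def by algebra
  next
    case False
    have sign: "(-1::real)^m = -1" using False by simp
    have b: "bcoef N a b m = -1 + a - b" "bcoef N a b (Suc m) = -1 - a + b"
      "ucoef N a b m * bcoef N a b (m - 1) = ucoef N a b m * (-1 - a + b)"
      using False by (cases m, simp_all add: ucoef_0 bcoef_def)+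
    have u: "ucoef N a b m = 4 * (a + real m) * (b + real N + 1 - real m)"
      "ucoef N a b (Suc m) = 4 * (real m + 1) * (real N + 1 - (real m + 1))"
      using False by (simp_all add: ucoef_def algebra_simps)
    show ?thesis unfolding C C_g using C2[unfolded sign key_c1_def key_c2_def] H_m C_m P_Suc P_Suc_Suc b u
      unfolding f_def by algebra
  qed
qed

lemma dhP_eigen_and_comm:
  "Hop N a b (dhP N a b n) x = 2 * real n * dhP N a b n x \<and>
   comm_op N a b (dhP N a b n) x = 4 * dhP N a b (Suc n) x - 2 * (x - bcoef N a b n) * dhP N a b n x"
proof (induction n rule: less_induct)
  case (less n)
  show ?case
  proof (cases n)
    case 0
    have "dhP N a b 0 = (\<lambda>y. 1)" by (rule ext) simp
    then show ?thesis using 0 comm_op_const by (simp add: Hop_const algebra_simps)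
  next
    case (Suc m)
    then show ?thesis using less[of m] less[of "m - 1"] Hop_dhP_Suc comm_op_dhP_Suc by auto
  qed
qed

end

(* Continuity, used to remove the apparent singularity at x = -5. *)
lemma isCont_dhP: "isCont (dhP N a b n) z"
proof (induction n arbitrary: z rule: less_induct)
  case (less n)
  show ?case
  proof (cases n)
    case (Suc m)
    have "isCont (dhP N a b m) z" "isCont (dhP N a b (m - 1)) z" using less Suc by auto
    then show ?thesis unfolding Suc dhP_Suc_fun by (intro continuous_intros)
  qed simp
qed

lemma isCont_Hop:
  assumes f_cont: "\<And>y. isCont f y" and z: "z \<notin> {1, -1, 3, -3}"
  shows "isCont (\<lambda>y. Hop N a b f y) z"
proof -
  have f_comp: "isCont (\<lambda>y. f (h y)) z" if "isCont h z" for h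
    using isCont_o2[OF that f_cont] .
  have "1 - z^2 \<noteq> 0"
  proof -
    have "1 - z^2 = (1 - z) * (1 + z)" by (simp add: algebra_simps power2_eq_square)
    then show ?thesis using z by auto
  qed
  then show ?thesis using z
    unfolding Hop_def E1_def E2_def G1_def G2_def Let_def
    by (intro continuous_intros f_comp) auto
qed

lemma isCont_eq_at_point:
  fixes F G :: "real \<Rightarrow> real"
  assumes "isCont F z" "isCont G z" and "eventually (\<lambda>y. F y = G y) (at z)"
  shows "F z = G z"
proof -
  have "G \<midarrow>z\<rightarrow> G z" using assms(2) isCont_def by blast
  moreover have "eventually (\<lambda>y. G y = F y) (at z)"
    using assms(3) by (simp add: eq_commute)
  ultimately have "F \<midarrow>z\<rightarrow> G z" by (rule Lim_transform_eventually)
  moreover have "F \<midarrow>z\<rightarrow> F z" using assms(1) isCont_def by blast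
  ultimately show ?thesis using LIM_unique by blast
qed

theorem mainTheorem8:
  fixes N n :: nat and \<alpha> \<beta> x :: real
  assumes "odd N" and "N > 0" and "n \<le> N"
    and "x \<notin> {1, -1, 3, -3}"
  shows "Hop N \<alpha> \<beta> (dhP N \<alpha> \<beta> n) x = 2 * real n * dhP N \<alpha> \<beta> n x"
proof (cases "x = -5")
  case False
  then show ?thesis using assms(4) dhP_eigen_and_comm by simp
next
  case True
  have near: "Hop N \<alpha> \<beta> (dhP N \<alpha> \<beta> n) y = 2 * real n * dhP N \<alpha> \<beta> n y"
    if "y \<noteq> x" "dist y x < 1" for y
  proof -
    have "y \<notin> {1, -1, 3, -3, -5}" using that True by (auto simp: dist_real_def)
    then show ?thesis using dhP_eigen_and_comm by blast
  qed
  have "eventually (\<lambda>y. Hop N \<alpha> \<beta> (dhP N \<alpha> \<beta> n) y = 2 * real n * dhP N \<alpha> \<beta> n y) (at x)"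
    unfolding eventually_at using near by (intro exI[of _ 1]) auto
  moreover have "isCont (\<lambda>y. Hop N \<alpha> \<beta> (dhP N \<alpha> \<beta> n) y) x"
    using isCont_Hop[OF isCont_dhP assms(4)] .
  moreover have "isCont (\<lambda>y. 2 * real n * dhP N \<alpha> \<beta> n y) x"
    using isCont_dhP by (intro continuous_intros)
  ultimately show ?thesis by (rule isCont_eq_at_point[rotated 2])
qed

end
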